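(* Let $P$ be an $n\times n$ complex matrix and let $S_P: M_n\to M_n$ be the Schur product map $S_P(B)=P\circ B$. Then $S_P$ is PPT if and only if $P\ge 0$ and $P$ is diagonal.
   Context: For $A=(a_{i,j}),B=(b_{i,j})$ of the same size, the Schur product is $A\circ B=(a_{i,j}b_{i,j})$. A linear map is completely positive (CP) if $\phi\otimes \mathrm{id}_k$ is positive for all $k$. A CP map $\phi: M_n\to M_n$ is PPT if $T\circ\phi$ is CP, where $T$ is the transpose map on $M_n$. *)

theory Defs
  imports Complex_Main "Jordan_Normal_Form.Matrix"
begin

definition psd :: "nat \<Rightarrow> complex mat \<Rightarrow> bool" where
  "psd n A \<longleftrightarrow> A \<in> carrier_mat n n
     \<and> (\<forall>i<n. \<forall>j<n. A $$ (i,j) = cnj (A $$ (j,i)))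
     \<and> (\<forall>x :: nat \<Rightarrow> complex.
          let q = (\<Sum>i<n. \<Sum>j<n. cnj (x i) * A $$ (i,j) * x j)
          in Im q = 0 \<and> Re q \<ge> 0)"

definition positive_map :: "nat \<Rightarrow> (complex mat \<Rightarrow> complex mat) \<Rightarrow> bool" where
  "positive_map n \<phi> \<longleftrightarrow> (\<forall>A. psd n A \<longrightarrow> psd n (\<phi> A))"

text \<open>The n x n block (a,b) of a (k*n) x (k*n) matrix X, viewing X as an element of M_k(M_n).\<close>
definition block :: "nat \<Rightarrow> complex mat \<Rightarrow> nat \<Rightarrow> nat \<Rightarrow> complex mat" where
  "block n X a b = mat n n (\<lambda>(i,j). X $$ (a*n + i, b*n + j))"

text \<open>phi (x) id_k acting on M_k(M_n) = M_n (x) M_k, blockwise.\<close>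
definition ampliation :: "nat \<Rightarrow> nat \<Rightarrow> (complex mat \<Rightarrow> complex mat) \<Rightarrow> complex mat \<Rightarrow> complex mat" where
  "ampliation n k \<phi> X = mat (k*n) (k*n)
     (\<lambda>(p,q). \<phi> (block n X (p div n) (q div n)) $$ (p mod n, q mod n))"

definition completely_positive :: "nat \<Rightarrow> (complex mat \<Rightarrow> complex mat) \<Rightarrow> bool" where
  "completely_positive n \<phi> \<longleftrightarrow>
     (\<forall>k. \<forall>X. psd (k*n) X \<longrightarrow> psd (k*n) (ampliation n k \<phi> X))"

definition PPT :: "nat \<Rightarrow> (complex mat \<Rightarrow> complex mat) \<Rightarrow> bool" where
  "PPT n \<phi> \<longleftrightarrow> completely_positive n \<phi> \<and> completely_positive n (transpose_mat \<circ> \<phi>)"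

definition schur_prod :: "complex mat \<Rightarrow> complex mat \<Rightarrow> complex mat" where
  "schur_prod A B = mat (dim_row A) (dim_col A) (\<lambda>(i,j). A $$ (i,j) * B $$ (i,j))"

end

(* If P is diagonal, then S_P (x) id_k and (T o S_P) (x) id_k both act on M_k(M_n) as the Schur
   product with J_k (x) P, which is a sum of compressions of X weighted by the diagonal entries of P;
   hence both maps are completely positive.  Conversely, applying S_P to the all-ones matrix gives
   P >= 0, and applying (T o S_P) (x) id_n to the rank-one matrix of the vector sum_a e_a (x) e_a
   gives a psd matrix with the 2 x 2 principal submatrix [[0, P_ji], [P_ij, 0]] at the indices
   (j,i), (i,j), which forces P_ji = 0. *)
theory Submission imports Defs begin

definition quad_form :: "nat \<Rightarrow> complex mat \<Rightarrow> (nat \<Rightarrow> complex) \<Rightarrow> complex" where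
  "quad_form N A x = (\<Sum>i<N. \<Sum>j<N. cnj (x i) * A $$ (i,j) * x j)"

lemma psd_iff_quad_form:
  "psd N A \<longleftrightarrow> A \<in> carrier_mat N N \<and> (\<forall>i<N. \<forall>j<N. A $$ (i,j) = cnj (A $$ (j,i)))
     \<and> (\<forall>x. Im (quad_form N A x) = 0 \<and> 0 \<le> Re (quad_form N A x))"
  by (simp add: psd_def quad_form_def Let_def)

lemma quad_form_unit_vector:
  assumes "r < N"
  shows "quad_form N A (\<lambda>i. if i = r then 1 else 0) = A $$ (r,r)"
  using assms by (simp add: quad_form_def if_distrib if_distribR sum.If_cases)

lemma quad_form_two_point:
  assumes "a < N" "b < N" "a \<noteq> b"
  shows "quad_form N A (\<lambda>i. if i = a then u else if i = b then w else 0)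
     = cnj u * A $$ (a,a) * u + cnj u * A $$ (a,b) * w + cnj w * A $$ (b,a) * u + cnj w * A $$ (b,b) * w"
proof -
  let ?x = "\<lambda>i. if i = a then u else if i = b then w else 0"
  have two_point: "(\<Sum>i<N. f i) = f a + f b" if "\<And>i. ?x i = 0 \<Longrightarrow> f i = 0" for f :: "nat \<Rightarrow> complex"
  proof -
    have "(\<Sum>i<N. f i) = (\<Sum>i\<in>{a,b}. f i)"
      using assms that by (intro sum.mono_neutral_right) auto
    then show ?thesis using assms(3) by simp
  qed
  have "quad_form N A ?x = (\<Sum>i<N. cnj (?x i) * (A $$ (i,a) * u + A $$ (i,b) * w))"
    unfolding quad_form_def
    by (intro sum.cong refl, subst two_point) (use assms(3) in \<open>auto simp: algebra_simps\<close>)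
  also have "\<dots> = cnj u * (A $$ (a,a) * u + A $$ (a,b) * w) + cnj w * (A $$ (b,a) * u + A $$ (b,b) * w)"
    by (subst two_point) (use assms(3) in auto)
  finally show ?thesis by (simp add: algebra_simps)
qed

lemma psd_diag_nonneg:
  assumes "psd N A" "r < N"
  shows "Im (A $$ (r,r)) = 0 \<and> 0 \<le> Re (A $$ (r,r))"
proof -
  have "Im (quad_form N A (\<lambda>i. if i = r then 1 else 0)) = 0 \<and> 0 \<le> Re (quad_form N A (\<lambda>i. if i = r then 1 else 0))"
    using assms(1) unfolding psd_iff_quad_form by blast
  then show ?thesis unfolding quad_form_unit_vector[OF assms(2)] .
qed

lemma psd_offdiag_zero:
  assumes A: "psd N A" and ab: "a < N" "b < N" and zero: "A $$ (a,a) = 0" "A $$ (b,b) = 0"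
  shows "A $$ (a,b) = 0"
proof (cases "a = b")
  case True
  then show ?thesis using zero by simp
next
  case False
  define z where "z = A $$ (a,b)"
  have "A $$ (b,a) = cnj z" using A ab unfolding psd_iff_quad_form z_def by blast
  then have "quad_form N A (\<lambda>i. if i = a then 1 else if i = b then - cnj z else 0) = - 2 * (cnj z * z)"
    unfolding quad_form_two_point[OF ab False] zero z_def[symmetric] by simp
  moreover have "0 \<le> Re (quad_form N A (\<lambda>i. if i = a then 1 else if i = b then - cnj z else 0))"
    using A unfolding psd_iff_quad_form by blast
  ultimately have "(Re z)\<^sup>2 + (Im z)\<^sup>2 \<le> 0" by (simp add: power2_eq_square)
  then show ?thesis unfolding z_def[symmetric] sum_power2_le_zero_iff by (simp add: complex_eq_iff)
qed

lemma psd_rank_one: "psd N (mat N N (\<lambda>(p,q). v p * cnj (v q)))"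
  unfolding psd_iff_quad_form
proof (intro conjI allI impI)
  fix x :: "nat \<Rightarrow> complex"
  define z where "z = (\<Sum>i<N. v i * cnj (x i))"
  have "quad_form N (mat N N (\<lambda>(p,q). v p * cnj (v q))) x = z * cnj z"
    unfolding quad_form_def z_def by (simp add: sum_product sum_distrib_left mult_ac) (rule sum.swap)
  then show "Im (quad_form N (mat N N (\<lambda>(p,q). v p * cnj (v q))) x) = 0"
    "0 \<le> Re (quad_form N (mat N N (\<lambda>(p,q). v p * cnj (v q))) x)"
    by (simp_all add: complex_mult_cnj)
qed (simp_all add: mult.commute)

text \<open>The Schur product of X with J_k \<otimes> diag d, indexing M_k(M_n) as in the ampliation.\<close>
definition diag_schur_ampl :: "nat \<Rightarrow> nat \<Rightarrow> (nat \<Rightarrow> complex) \<Rightarrow> complex mat \<Rightarrow> complex mat" where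
  "diag_schur_ampl n k d X =
     mat (k*n) (k*n) (\<lambda>(p,q). if p mod n = q mod n then d (p mod n) * X $$ (p,q) else 0)"

lemma quad_form_diag_schur_ampl:
  "quad_form (k*n) (diag_schur_ampl n k d X) x
     = (\<Sum>r<n. d r * quad_form (k*n) X (\<lambda>p. if p mod n = r then x p else 0))"
proof -
  have "(\<Sum>r<n. d r * (cnj (if p mod n = r then x p else 0) * X $$ (p,q) * (if q mod n = r then x q else 0)))
      = cnj (x p) * diag_schur_ampl n k d X $$ (p,q) * x q"
    if "p < k*n" "q < k*n" for p q
  proof -
    have "n > 0" using that by (cases n) auto
    then show ?thesis
      using that by (simp add: diag_schur_ampl_def if_distrib if_distribR sum.If_cases mult_ac)
  qed
  then show ?thesis
    unfolding quad_form_def sum_distrib_left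
    by (subst sum.swap, simp add: sum.swap[where A="{..<n}"] mult.assoc)
qed

lemma psd_diag_schur_ampl:
  assumes X: "psd (k*n) X" and d: "\<And>r. r < n \<Longrightarrow> Im (d r) = 0 \<and> 0 \<le> Re (d r)"
  shows "psd (k*n) (diag_schur_ampl n k d X)"
  unfolding psd_iff_quad_form
proof (intro conjI allI impI)
  fix p q assume pq: "p < k*n" "q < k*n"
  then have "p mod n < n" by (cases n) auto
  then have "cnj (d (p mod n)) = d (p mod n)" using d by (simp add: complex_eq_iff)
  moreover have "X $$ (p,q) = cnj (X $$ (q,p))" using X pq unfolding psd_iff_quad_form by blast
  ultimately show "diag_schur_ampl n k d X $$ (p,q) = cnj (diag_schur_ampl n k d X $$ (q,p))"
    using pq by (auto simp: diag_schur_ampl_def)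
next
  fix x
  have summand: "Im (d r * quad_form (k*n) X y) = 0 \<and> 0 \<le> Re (d r * quad_form (k*n) X y)"
    if "r < n" for r y
    using d[OF that] X unfolding psd_iff_quad_form by simp
  show "Im (quad_form (k*n) (diag_schur_ampl n k d X) x) = 0"
    "0 \<le> Re (quad_form (k*n) (diag_schur_ampl n k d X) x)"
    unfolding quad_form_diag_schur_ampl Im_sum Re_sum using summand
    by (auto intro: sum_nonneg)
qed (simp add: diag_schur_ampl_def)

lemma block_index_less:
  fixes a b k n :: nat
  assumes "a < k" "b < n"
  shows "a*n + b < k*n"
proof -
  have "a*n + b < Suc a * n" using assms(2) by simp
  also have "\<dots> \<le> k*n" using assms(1) by (intro mult_le_mono1) simp
  finally show ?thesis .
qed

lemma eq_mat_blockwiseI: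
  assumes "A \<in> carrier_mat (k*n) (k*n)" "B \<in> carrier_mat (k*n) (k*n)"
    and "\<And>a b c e. a < k \<Longrightarrow> c < k \<Longrightarrow> b < n \<Longrightarrow> e < n \<Longrightarrow> A $$ (a*n + b, c*n + e) = B $$ (a*n + b, c*n + e)"
  shows "A = B"
proof (rule eq_matI)
  fix p q assume "p < dim_row B" "q < dim_col B"
  then have pq: "p < k*n" "q < k*n" using assms(2) by auto
  moreover from pq have "n > 0" by (cases n) auto
  ultimately have "p div n < k" "q div n < k" "p mod n < n" "q mod n < n"
    by (auto simp: less_mult_imp_div_less)
  then show "A $$ (p,q) = B $$ (p,q)"
    using assms(3) by (metis div_mult_mod_eq)
qed (use assms in auto)

lemma diag_schur_ampl_index_block:
  assumes "a < k" "c < k" "b < n" "e < n"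
  shows "diag_schur_ampl n k d X $$ (a*n + b, c*n + e) = (if b = e then d b * X $$ (a*n + b, c*n + e) else 0)"
  using assms block_index_less[OF assms(1,3)] block_index_less[OF assms(2,4)]
  by (simp add: diag_schur_ampl_def)

lemma ampliation_index_block:
  assumes "a < k" "c < k" "b < n" "e < n"
  shows "ampliation n k \<phi> X $$ (a*n + b, c*n + e) = \<phi> (block n X a c) $$ (b,e)"
  using assms block_index_less[OF assms(1,3)] block_index_less[OF assms(2,4)]
  by (simp add: ampliation_def)

lemma schur_prod_carrier: "P \<in> carrier_mat n n \<Longrightarrow> schur_prod P B \<in> carrier_mat n n"
  by (simp add: schur_prod_def)

lemma ampliation_schur_index_block:
  assumes "P \<in> carrier_mat n n" "a < k" "c < k" "b < n" "e < n"
  shows "ampliation n k (schur_prod P) X $$ (a*n + b, c*n + e) = P $$ (b,e) * X $$ (a*n + b, c*n + e)"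
  using assms by (simp add: ampliation_index_block schur_prod_def block_def)

lemma ampliation_transpose_schur_index_block:
  assumes "P \<in> carrier_mat n n" "a < k" "c < k" "b < n" "e < n"
  shows "ampliation n k (transpose_mat \<circ> schur_prod P) X $$ (a*n + b, c*n + e)
    = P $$ (e,b) * X $$ (a*n + e, c*n + b)"
  using assms by (simp add: ampliation_index_block schur_prod_def block_def)

lemma ampliation_schur_diagonal:
  assumes "P \<in> carrier_mat n n" "diagonal_mat P"
  shows "ampliation n k (schur_prod P) X = diag_schur_ampl n k (\<lambda>r. P $$ (r,r)) X"
proof (rule eq_mat_blockwiseI)
  fix a b c e assume "a < k" "c < k" "b < n" "e < n"
  with assms show "ampliation n k (schur_prod P) X $$ (a*n + b, c*n + e)
      = diag_schur_ampl n k (\<lambda>r. P $$ (r,r)) X $$ (a*n + b, c*n + e)"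
    by (auto simp: ampliation_schur_index_block diag_schur_ampl_index_block diagonal_mat_def)
qed (simp_all add: ampliation_def diag_schur_ampl_def)

lemma ampliation_transpose_schur_diagonal:
  assumes "P \<in> carrier_mat n n" "diagonal_mat P"
  shows "ampliation n k (transpose_mat \<circ> schur_prod P) X = diag_schur_ampl n k (\<lambda>r. P $$ (r,r)) X"
proof (rule eq_mat_blockwiseI)
  fix a b c e assume "a < k" "c < k" "b < n" "e < n"
  with assms show "ampliation n k (transpose_mat \<circ> schur_prod P) X $$ (a*n + b, c*n + e)
      = diag_schur_ampl n k (\<lambda>r. P $$ (r,r)) X $$ (a*n + b, c*n + e)"
    by (auto simp: ampliation_transpose_schur_index_block diag_schur_ampl_index_block diagonal_mat_def)
qed (simp_all add: ampliation_def diag_schur_ampl_def)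

lemma PPT_schur_diagonal:
  assumes "P \<in> carrier_mat n n" "psd n P" "diagonal_mat P"
  shows "PPT n (schur_prod P)"
  using assms psd_diag_schur_ampl[where d = "\<lambda>r. P $$ (r,r)"] psd_diag_nonneg
  by (simp add: PPT_def completely_positive_def ampliation_schur_diagonal
      ampliation_transpose_schur_diagonal)

lemma ampliation_1:
  assumes "X \<in> carrier_mat n n" "\<phi> X \<in> carrier_mat n n"
  shows "ampliation n 1 \<phi> X = \<phi> X"
proof -
  have "block n X 0 0 = X" using assms(1) by (auto simp: block_def)
  then show ?thesis using assms(2) by (auto simp: ampliation_def)
qed

lemma completely_positive_imp_positive_map:
  assumes "completely_positive n \<phi>" "\<And>A. A \<in> carrier_mat n n \<Longrightarrow> \<phi> A \<in> carrier_mat n n"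
  shows "positive_map n \<phi>"
  unfolding positive_map_def
proof (intro allI impI)
  fix A assume "psd n A"
  then have "psd (1*n) (ampliation n 1 \<phi> A)"
    using assms(1) unfolding completely_positive_def by (metis mult_1)
  moreover have "A \<in> carrier_mat n n" using \<open>psd n A\<close> unfolding psd_def by blast
  ultimately show "psd n (\<phi> A)" using assms(2) ampliation_1 by simp
qed

lemma positive_schur_imp_psd:
  assumes P: "P \<in> carrier_mat n n" and pos: "positive_map n (schur_prod P)"
  shows "psd n P"
proof -
  have "psd n (mat n n (\<lambda>_. 1))" using psd_rank_one[of n "\<lambda>_. 1"] by (simp add: case_prod_unfold)
  then have "psd n (schur_prod P (mat n n (\<lambda>_. 1)))" using pos unfolding positive_map_def by blast
  moreover have "schur_prod P (mat n n (\<lambda>_. 1)) = P" using P by (auto simp: schur_prod_def)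
  ultimately show ?thesis by simp
qed

lemma completely_positive_transpose_schur_imp_diagonal:
  assumes P: "P \<in> carrier_mat n n" and cp: "completely_positive n (transpose_mat \<circ> schur_prod P)"
  shows "diagonal_mat P"
proof -
  define v where "v p = (if p div n = p mod n then 1 else 0 :: complex)" for p
  define Y where "Y = ampliation n n (transpose_mat \<circ> schur_prod P) (mat (n*n) (n*n) (\<lambda>(p,q). v p * cnj (v q)))"
  have Y: "psd (n*n) Y" using cp psd_rank_one unfolding completely_positive_def Y_def by blast
  have v: "v (a*n + b) = (if a = b then 1 else 0)" if "b < n" for a b
    using that by (simp add: v_def)
  have Y_index: "Y $$ (a*n + b, c*n + e) = P $$ (e,b) * v (a*n + e) * cnj (v (c*n + b))"
    if "a < n" "c < n" "b < n" "e < n" for a b c e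
    using that block_index_less[OF that(1,4)] block_index_less[OF that(2,3)]
    by (simp add: Y_def ampliation_transpose_schur_index_block[OF P])
  have "P $$ (j,i) = 0" if ij: "i < n" "j < n" "i \<noteq> j" for i j
  proof -
    have "Y $$ (j*n + i, j*n + i) = 0" "Y $$ (i*n + j, i*n + j) = 0"
      using ij by (simp_all add: Y_index v)
    then have "Y $$ (j*n + i, i*n + j) = 0"
      using psd_offdiag_zero[OF Y] block_index_less ij by blast
    then show ?thesis using ij by (simp add: Y_index v)
  qed
  then show ?thesis using P unfolding diagonal_mat_def by auto
qed

theorem mainTheorem8:
  fixes P :: "complex mat" and n :: nat
  assumes "P \<in> carrier_mat n n"
  shows "PPT n (\<lambda>B. schur_prod P B) \<longleftrightarrow> psd n P \<and> diagonal_mat P"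
proof
  assume "PPT n (\<lambda>B. schur_prod P B)"
  then have cp: "completely_positive n (schur_prod P)"
    and cp_transpose: "completely_positive n (transpose_mat \<circ> schur_prod P)"
    unfolding PPT_def by auto
  have "positive_map n (schur_prod P)"
    using completely_positive_imp_positive_map[OF cp] schur_prod_carrier[OF assms] by blast
  then show "psd n P \<and> diagonal_mat P"
    using positive_schur_imp_psd[OF assms] completely_positive_transpose_schur_imp_diagonal[OF assms cp_transpose]
    by blast
next
  assume "psd n P \<and> diagonal_mat P"
  then show "PPT n (\<lambda>B. schur_prod P B)" using PPT_schur_diagonal[OF assms] by blast
qed

end
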